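(* Let $X=(\mathbb{R}/\mathbb{Z})^2$ with Lebesgue measure $\mu$, let $f\colon X\to X$ be $f(x,y)=(x+y,y)$, and let $\varphi\colon X\to\mathbb{C}$ be $\varphi(x,y)=e(x)$, where $e(z)=\exp(2\pi i z)$. Let $(a_p)$ be a sequence indexed by the primes, with $a_p$ an integer, $0\leq a_p<p$, such that for almost every $y\in[0,1]$ the set of primes $p$ with $|y-a_p/p|\leq 1/(2p)$ is infinite. For each prime $p$ and $n\in\mathbb{Z}$ let $t_p(n)=e(-na_p/p)$, and define $s_p\colon X\to\mathbb{C}$ by $$s_p(x,y)=\frac{1}{p}\sum_{0\leq n<p}t_p(n)\,\varphi(f^n(x,y)).$$ Then: (1) the sequence $(s_p)$ does not converge $\mu$-almost everywhere as $p\to+\infty$; (2) if $\mathsf{P}$ is an infinite set of primes such that $\sum_{p\in\mathsf{P}}\frac{\log p}{p}<+\infty$, then the sequence $(s_p)_{p\in\mathsf{P}}$ converges $\mu$-almost everywhere to $0$.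
   Context: Such sequences $(a_p)$ exist (the paper chooses one via its main theorem with $c=1/2$); the proposition is stated for any such sequence. *)

theory Defs
  imports "HOL-Analysis.Analysis"
begin

text \<open>The torus (R/Z)^2 is represented by the fundamental domain [0,1) x [0,1),
  with Lebesgue measure (restriction of lborel on real x real).\<close>

definition torus :: "(real \<times> real) set" where
  "torus = {0..<1} \<times> {0..<1}"

definition e :: "real \<Rightarrow> complex" where
  "e z = exp (2 * of_real pi * \<i> * of_real z)"

definition skew :: "real \<times> real \<Rightarrow> real \<times> real" where
  "skew z = (frac (fst z + snd z), snd z)"

definition phi :: "real \<times> real \<Rightarrow> complex" where
  "phi z = e (fst z)"

definition t :: "(nat \<Rightarrow> int) \<Rightarrow> nat \<Rightarrow> int \<Rightarrow> complex" where
  "t a p n = e (- (of_int n * of_int (a p) / real p))"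

definition s :: "(nat \<Rightarrow> int) \<Rightarrow> nat \<Rightarrow> real \<times> real \<Rightarrow> complex" where
  "s a p z = (1 / of_nat p) * (\<Sum>n<p. t a p (int n) * phi ((skew ^^ n) z))"

end

theory Submission
  imports Defs "HOL-Computational_Algebra.Primes"
begin

text \<open>Unwinding the skew map, \<open>s\<^sub>p(x, y) = e(x) G\<^sub>p(y - a\<^sub>p/p) / p\<close>, where \<open>G\<^sub>p(\<theta>)\<close> is the
  geometric sum of \<open>e(n\<theta>)\<close> over \<open>n < p\<close>, so \<open>|G\<^sub>p(\<theta>)| = |sin(\<pi>p\<theta>)| / |sin(\<pi>\<theta>)|\<close>. By Jordan's
  inequality \<open>|G\<^sub>p(\<theta>)| \<ge> 2p/\<pi>\<close> when \<open>|\<theta>| \<le> 1/(2p)\<close>, while \<open>|G\<^sub>p(\<theta>)| \<le> 1/(2|\<theta> - k|)\<close> for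
  the nearest integer \<open>k\<close>.

  If \<open>1/p\<close> is summable over \<open>P\<close>, Borel-Cantelli shows that for almost every \<open>y\<close> and every \<open>m\<close>,
  eventually \<open>|y - a\<^sub>p/p - k| > m/p\<close> for \<open>k \<in> {-1, 0, 1}\<close>; then \<open>|s\<^sub>p| \<le> 1/(2m)\<close>, so \<open>s\<^sub>p \<rightarrow> 0\<close>
  almost everywhere along \<open>P\<close>. This gives (2), since \<open>1/p \<le> log p / (p log 2)\<close>. For (1), the
  primes contain an infinite set \<open>P\<close> over which \<open>1/p\<close> is summable, so an almost everywhere
  limit along all primes would be \<open>0\<close>; but by hypothesis almost every point has infinitely many
  \<open>p\<close> with \<open>|y - a\<^sub>p/p| \<le> 1/(2p)\<close>, where \<open>|s\<^sub>p| \<ge> 2/\<pi>\<close>.\<close>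

lemma sin_ge_Jordan:
  assumes "0 \<le> x" "x \<le> pi / 2"
  shows "2 / pi * x \<le> sin x"
proof -
  have "concave_on {0..pi} sin"
    by (rule f''_le0_imp_concave[where f' = cos and f'' = "\<lambda>x. - sin x"])
       (auto intro!: derivative_eq_intros sin_ge_zero)
  then have "(1 - 2 / pi * x) * sin 0 + 2 / pi * x * sin (pi / 2)
      \<le> sin ((1 - 2 / pi * x) *\<^sub>R 0 + (2 / pi * x) *\<^sub>R (pi / 2))"
    using assms by (intro concave_onD) (auto simp: field_simps)
  then show ?thesis
    by simp
qed

lemma abs_sin_ge_Jordan: "\<bar>x\<bar> \<le> pi / 2 \<Longrightarrow> 2 / pi * \<bar>x\<bar> \<le> \<bar>sin x\<bar>"
  using sin_ge_Jordan[of "\<bar>x\<bar>"] by (cases "x \<ge> 0") auto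

lemma AE_eventually_dist_gt:
  fixes c r :: "nat \<Rightarrow> real"
  assumes r_nonneg: "\<And>n. n \<in> P \<Longrightarrow> 0 \<le> r n" and r_summable: "r summable_on P"
  shows "AE y in lborel. \<forall>\<^sub>F n in inf sequentially (principal P). r n < \<bar>y - c n\<bar>"
proof -
  define R where "R n = (if n \<in> P then r n else 0)" for n
  have R_nonneg: "0 \<le> R n" for n
    by (simp add: R_def r_nonneg)
  have "R summable_on UNIV"
    using r_summable unfolding R_def by (subst summable_on_cong_neutral[where T = P]) auto
  then have "summable R"
    using R_nonneg by (subst (asm) summable_on_UNIV_nonneg_real_iff) auto
  define A where "A n = {c n - R n .. c n + R n}" for n
  have "measure lborel (A n) = 2 * R n" for n
    using R_nonneg[of n] by (simp add: A_def measure_def)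
  then have "AE y in lborel. \<forall>\<^sub>F n in sequentially. y \<in> space lborel - A n"
    using \<open>summable R\<close> by (intro borel_cantelli_AE1) (auto simp: A_def emeasure_lborel_Icc_eq intro: summable_mult)
  then show ?thesis
    by (rule eventually_mono, unfold eventually_inf_principal, elim eventually_mono)
       (auto simp: A_def R_def)
qed

lemma AE_lborel_snd:
  assumes "AE y in lborel. Q y"
  shows "AE z in (lborel :: ('a::euclidean_space \<times> 'b::euclidean_space) measure). Q (snd z)"
proof -
  obtain N where N: "N \<in> null_sets lborel" "{y. \<not> Q y} \<subseteq> N"
    using assms unfolding eventually_ae_filter by auto
  have "UNIV \<times> N \<in> null_sets (lborel \<Otimes>\<^sub>M (lborel :: 'b measure))"
    using N by (intro lborel.times_in_null_sets2) auto
  then have "UNIV \<times> N \<in> null_sets (lborel :: ('a \<times> 'b) measure)"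
    by (simp add: lborel_prod)
  moreover have "{z \<in> space lborel. \<not> Q (snd z)} \<subseteq> UNIV \<times> N"
    using N by auto
  ultimately show ?thesis
    unfolding eventually_ae_filter by blast
qed

lemma frequently_inf_principal_sequentially:
  "(\<exists>\<^sub>F n in inf sequentially (principal A). Q n) \<longleftrightarrow> infinite {n \<in> A. Q n}"
  unfolding frequently_def eventually_inf_principal cofinite_eq_sequentially[symmetric]
    eventually_cofinite by simp

lemma no_limit_if_frequently_large:
  fixes f :: "nat \<Rightarrow> 'a::real_normed_vector"
  assumes large: "infinite {n \<in> A. c \<le> norm (f n)}" and "0 < c"
    and "B \<subseteq> A" "infinite B" and to_zero: "(f \<longlongrightarrow> 0) (inf sequentially (principal B))"
  shows "\<nexists>L. (f \<longlongrightarrow> L) (inf sequentially (principal A))"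
proof
  assume "\<exists>L. (f \<longlongrightarrow> L) (inf sequentially (principal A))"
  then obtain L where L: "(f \<longlongrightarrow> L) (inf sequentially (principal A))" ..
  have "inf sequentially (principal B) \<noteq> bot"
    using \<open>infinite B\<close> frequently_inf_principal_sequentially[where A = B and Q = "\<lambda>_. True"]
    by (auto simp: frequently_def)
  moreover have "(f \<longlongrightarrow> L) (inf sequentially (principal B))"
    using \<open>B \<subseteq> A\<close> by (intro tendsto_mono[OF _ L] inf_mono) simp_all
  ultimately have "L = 0"
    using to_zero by (rule tendsto_unique)
  then have "\<forall>\<^sub>F n in inf sequentially (principal A). \<not> c \<le> norm (f n)"
    using tendstoD[OF L \<open>0 < c\<close>] by (auto elim: eventually_mono)
  moreover have "\<exists>\<^sub>F n in inf sequentially (principal A). c \<le> norm (f n)"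
    using large by (simp add: frequently_inf_principal_sequentially)
  ultimately show False
    by (simp add: frequently_def)
qed

lemma infinite_subset_summable_inverse:
  fixes S :: "nat set"
  assumes "infinite S"
  obtains T where "T \<subseteq> S" "infinite T" "(\<lambda>n. 1 / real n) summable_on T"
proof
  define g where "g k = enumerate S (2 ^ k)" for k
  have "strict_mono g"
    using \<open>infinite S\<close> by (simp add: g_def strict_mono_def)
  show "range g \<subseteq> S"
    using \<open>infinite S\<close> by (auto simp: g_def enumerate_in_set)
  show "infinite (range g)"
    using \<open>strict_mono g\<close> by (intro range_inj_infinite strict_mono_imp_inj_on)
  have "1 / real (g k) \<le> (1 / 2) ^ k" for k
  proof -
    have "(2::real) ^ k \<le> real (g k)"
      using le_enumerate[OF \<open>infinite S\<close>, of "2 ^ k"] unfolding g_def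
      by (metis of_nat_le_iff of_nat_numeral of_nat_power)
    then show ?thesis
      by (simp add: power_one_over frac_le)
  qed
  then have "summable (\<lambda>k. 1 / real (g k))"
    by (intro summable_comparison_test'[OF summable_geometric[of "1 / 2"]]) auto
  then have "((\<lambda>n. 1 / real n) \<circ> g) summable_on UNIV"
    by (subst summable_on_UNIV_nonneg_real_iff) (auto simp: o_def)
  then show "(\<lambda>n. 1 / real n) summable_on range g"
    using summable_on_reindex[of g UNIV "\<lambda>n. 1 / real n"] strict_mono_imp_inj_on[OF \<open>strict_mono g\<close>]
    by simp
qed

lemma summable_on_inverse_if_summable_on_ln_div:
  assumes P: "\<And>p. p \<in> P \<Longrightarrow> 2 \<le> p" and sum: "(\<lambda>p. ln (real p) / real p) summable_on P"
  shows "(\<lambda>p. 1 / real p) summable_on P"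
proof (rule summable_on_comparison_test)
  show "(\<lambda>p. 1 / ln 2 * (ln (real p) / real p)) summable_on P"
    using sum by (rule summable_on_cmult_right)
  fix p
  assume "p \<in> P"
  then have "ln 2 \<le> ln (real p)"
    using P[of p] by simp
  have "1 / real p = 1 / ln 2 * (ln 2 / real p)"
    by simp
  also have "\<dots> \<le> 1 / ln 2 * (ln (real p) / real p)"
    using \<open>ln 2 \<le> ln (real p)\<close> by (intro mult_left_mono divide_right_mono) auto
  finally show "1 / real p \<le> 1 / ln 2 * (ln (real p) / real p)" .
qed simp

lemma e_cis: "e x = cis (2 * pi * x)"
  by (simp add: e_def cis_conv_exp mult_ac)

lemma e_add: "e (x + y) = e x * e y"
  by (simp add: e_def distrib_left distrib_right exp_add)

lemma e_of_int [simp]: "e (of_int k) = 1"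
  unfolding e_cis by (rule cis_multiple_2pi) simp

lemma e_0 [simp]: "e 0 = 1"
  by (simp add: e_def)

lemma norm_e [simp]: "norm (e x) = 1"
  by (simp add: e_cis)

lemma e_diff_of_int: "e (x - of_int k) = e x"
  using e_add[of "x - of_int k" "of_int k"] by simp

lemma e_frac: "e (frac x) = e x"
  by (simp add: frac_def e_diff_of_int)

lemma e_of_nat_mult: "e (of_nat n * x) = e x ^ n"
  by (induction n) (simp_all add: e_def distrib_left distrib_right exp_add mult_ac)

lemma norm_1_minus_e: "norm (1 - e x) = 2 * \<bar>sin (pi * x)\<bar>"
proof -
  have "(norm (1 - e x))\<^sup>2 = (1 - cos (2 * pi * x))\<^sup>2 + (sin (2 * pi * x))\<^sup>2"
    by (simp add: e_cis cmod_def)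
  also have "\<dots> = 2 - 2 * cos (2 * pi * x)"
    using sin_cos_squared_add[of "2 * pi * x"] by (simp add: power2_diff)
  also have "\<dots> = (2 * \<bar>sin (pi * x)\<bar>)\<^sup>2"
    using cos_double_sin[of "pi * x"] by (simp add: power_mult_distrib mult_ac)
  finally show ?thesis
    by (subst (asm) power2_eq_iff_nonneg) auto
qed

lemma norm_1_minus_e_ge: "\<bar>x\<bar> \<le> 1 / 2 \<Longrightarrow> 4 * \<bar>x\<bar> \<le> norm (1 - e x)"
  using abs_sin_ge_Jordan[of "pi * x"] by (simp add: norm_1_minus_e abs_mult)

lemma norm_1_minus_e_le: "norm (1 - e x) \<le> 2 * pi * \<bar>x\<bar>"
  using abs_sin_x_le_abs_x[of "pi * x"] by (simp add: norm_1_minus_e abs_mult)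

definition exp_sum :: "nat \<Rightarrow> real \<Rightarrow> complex" where
  "exp_sum N x = (\<Sum>n<N. e (real n * x))"

lemma norm_exp_sum:
  assumes "e x \<noteq> 1"
  shows "norm (exp_sum N x) = norm (1 - e (real N * x)) / norm (1 - e x)"
  using assms by (simp add: exp_sum_def e_of_nat_mult sum_gp_strict norm_divide)

lemma norm_exp_sum_ge:
  assumes "N > 0" and x: "\<bar>x\<bar> \<le> 1 / (2 * real N)"
  shows "2 * real N / pi \<le> norm (exp_sum N x)"
proof (cases "x = 0")
  case True
  have "2 * real N / pi \<le> real N"
    using mult_right_mono[OF pi_ge_two, of "real N"] by (simp add: field_simps)
  then show ?thesis
    using True by (simp add: exp_sum_def)
next
  case False
  have "\<bar>real N * x\<bar> \<le> 1 / 2"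
    using x \<open>N > 0\<close> by (simp add: abs_mult field_simps)
  then have num: "4 * real N * \<bar>x\<bar> \<le> norm (1 - e (real N * x))"
    using norm_1_minus_e_ge[of "real N * x"] by (simp add: abs_mult)
  have "1 / (2 * real N) \<le> 1 / 2"
    using \<open>N > 0\<close> by (simp add: field_simps)
  with x have "\<bar>x\<bar> \<le> 1 / 2"
    by linarith
  then have "0 < norm (1 - e x)"
    using norm_1_minus_e_ge[of x] False by linarith
  have "2 * real N / pi = 4 * real N * \<bar>x\<bar> / (2 * pi * \<bar>x\<bar>)"
    using False by simp
  also have "\<dots> \<le> norm (1 - e (real N * x)) / norm (1 - e x)"
    using num norm_1_minus_e_le[of x] \<open>0 < norm (1 - e x)\<close>
    by (intro frac_le) simp_all
  also have "\<dots> = norm (exp_sum N x)"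
    using \<open>0 < norm (1 - e x)\<close> by (simp add: norm_exp_sum)
  finally show ?thesis .
qed

lemma norm_exp_sum_le:
  assumes "\<bar>x - of_int k\<bar> \<le> 1 / 2" and "x \<noteq> of_int k"
  shows "norm (exp_sum N x) \<le> 1 / (2 * \<bar>x - of_int k\<bar>)"
proof -
  have den: "4 * \<bar>x - of_int k\<bar> \<le> norm (1 - e x)"
    using norm_1_minus_e_ge[OF assms(1)] by (simp add: e_diff_of_int)
  have num: "norm (1 - e (real N * x)) \<le> 2"
    using norm_triangle_ineq4[of 1 "e (real N * x)"] by simp
  have "0 < \<bar>x - of_int k\<bar>"
    using assms(2) by simp
  then have "norm (exp_sum N x) = norm (1 - e (real N * x)) / norm (1 - e x)"
    using den by (intro norm_exp_sum) auto
  also have "\<dots> \<le> 2 / (4 * \<bar>x - of_int k\<bar>)"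
    using num den \<open>0 < \<bar>x - of_int k\<bar>\<close> by (intro frac_le) simp_all
  finally show ?thesis
    by simp
qed

lemma norm_exp_sum_le_if_far:
  assumes "0 \<le> y" "y \<le> 1" "0 \<le> b" "b < 1" "0 < r"
    and far: "\<And>k::int. k \<in> {-1, 0, 1} \<Longrightarrow> r < \<bar>y - (b + of_int k)\<bar>"
  shows "norm (exp_sum N (y - b)) \<le> 1 / (2 * r)"
proof -
  define k :: int where "k = (if y - b < -1/2 then -1 else if y - b \<le> 1/2 then 0 else 1)"
  have k: "k \<in> {-1, 0, 1}" "\<bar>y - b - of_int k\<bar> \<le> 1 / 2"
    using assms(1-4) by (auto simp: k_def split: abs_split)
  have "r < \<bar>y - b - of_int k\<bar>"
    using far[OF k(1)] by (simp add: algebra_simps)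
  then have "norm (exp_sum N (y - b)) \<le> 1 / (2 * \<bar>y - b - of_int k\<bar>)"
    using k(2) \<open>0 < r\<close> by (intro norm_exp_sum_le) auto
  also have "\<dots> \<le> 1 / (2 * r)"
    using \<open>r < \<bar>y - b - of_int k\<bar>\<close> \<open>0 < r\<close> by (intro divide_left_mono) auto
  finally show ?thesis .
qed

lemma exp_sum_div_tendsto_zero_if_far:
  fixes b :: "nat \<Rightarrow> real"
  assumes y: "y \<in> {0..1}" and b: "\<And>p. p \<in> P \<Longrightarrow> 0 \<le> b p \<and> b p < 1"
    and far: "\<And>m::nat. \<forall>k \<in> {-1, 0, 1::int}.
      \<forall>\<^sub>F p in inf sequentially (principal P). (real m + 1) / real p < \<bar>y - (b p + of_int k)\<bar>"
  shows "((\<lambda>p. norm (exp_sum p (y - b p)) / real p) \<longlongrightarrow> 0) (inf sequentially (principal P))"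
proof (rule tendstoI)
  let ?F = "inf sequentially (principal P)"
  fix \<epsilon> :: real
  assume "0 < \<epsilon>"
  obtain m :: nat where m: "inverse (real (Suc m)) < \<epsilon>"
    using reals_Archimedean[OF \<open>0 < \<epsilon>\<close>] by blast
  have "\<forall>\<^sub>F p in ?F. \<forall>k \<in> {-1, 0, 1::int}. (real m + 1) / real p < \<bar>y - (b p + of_int k)\<bar>"
    using far by (subst eventually_ball_finite_distrib) auto
  moreover have "\<forall>\<^sub>F p in ?F. p \<in> P \<and> 0 < p"
    unfolding eventually_inf_principal by (rule eventually_mono[OF eventually_gt_at_top]) auto
  ultimately show "\<forall>\<^sub>F p in ?F. dist (norm (exp_sum p (y - b p)) / real p) 0 < \<epsilon>"
  proof eventually_elim
    case (elim p)
    then have "norm (exp_sum p (y - b p)) \<le> 1 / (2 * ((real m + 1) / real p))"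
      using y b[of p] by (intro norm_exp_sum_le_if_far) auto
    then have "norm (exp_sum p (y - b p)) / real p \<le> 1 / (2 * (real m + 1))"
      using elim by (simp add: field_simps)
    also have "\<dots> < \<epsilon>"
      using m by (simp add: field_simps)
    finally show ?case
      by simp
  qed
qed

lemma AE_exp_sum_tendsto_zero:
  fixes b :: "nat \<Rightarrow> real"
  assumes b: "\<And>p. p \<in> P \<Longrightarrow> 0 \<le> b p \<and> b p < 1"
    and P: "(\<lambda>p. 1 / real p) summable_on P"
  shows "AE y in lborel. y \<in> {0..1} \<longrightarrow>
    ((\<lambda>p. norm (exp_sum p (y - b p)) / real p) \<longlongrightarrow> 0) (inf sequentially (principal P))"
proof -
  have "AE y in lborel. \<forall>\<^sub>F p in inf sequentially (principal P).
      (real m + 1) / real p < \<bar>y - (b p + of_int k)\<bar>" for m :: nat and k :: int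
    using summable_on_cmult_right[OF P, of "real m + 1"] by (intro AE_eventually_dist_gt) auto
  then have "AE y in lborel. \<forall>m::nat. \<forall>k \<in> {-1, 0, 1::int}. \<forall>\<^sub>F p in inf sequentially (principal P).
      (real m + 1) / real p < \<bar>y - (b p + of_int k)\<bar>"
    unfolding AE_all_countable by (intro allI AE_finite_allI) auto
  then show ?thesis
    by (rule eventually_mono) (auto intro: exp_sum_div_tendsto_zero_if_far[OF _ b])
qed

lemma snd_skew_iterate [simp]: "snd ((skew ^^ n) z) = snd z"
  by (induction n) (simp_all add: skew_def)

lemma phi_skew_iterate: "phi ((skew ^^ n) z) = e (fst z + real n * snd z)"
proof (induction n)
  case (Suc n)
  have "phi ((skew ^^ Suc n) z) = phi ((skew ^^ n) z) * e (snd z)"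
    by (simp add: skew_def phi_def e_frac e_add)
  also have "\<dots> = e (fst z + real (Suc n) * snd z)"
    by (simp add: Suc.IH e_add[symmetric] algebra_simps)
  finally show ?case .
qed (simp add: phi_def)

lemma s_eq_exp_sum:
  "s a p z = e (fst z) * exp_sum p (snd z - of_int (a p) / real p) / of_nat p"
proof -
  have "t a p (int n) * phi ((skew ^^ n) z) = e (fst z) * e (real n * (snd z - of_int (a p) / real p))"
    for n
    by (simp add: t_def phi_skew_iterate e_add[symmetric] algebra_simps)
  then show ?thesis
    by (simp add: s_def exp_sum_def sum_distrib_left sum_divide_distrib)
qed

lemma norm_s: "norm (s a p z) = norm (exp_sum p (snd z - of_int (a p) / real p)) / real p"
  by (simp add: s_eq_exp_sum norm_mult norm_divide)

lemma norm_s_ge: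
  assumes "0 < p" and "\<bar>snd z - of_int (a p) / real p\<bar> \<le> 1 / (2 * real p)"
  shows "2 / pi \<le> norm (s a p z)"
  using norm_exp_sum_ge[OF assms] \<open>0 < p\<close> by (simp add: norm_s field_simps)

lemma sets_torus: "torus \<in> sets lborel"
proof -
  have "{0..<1::real} \<times> {0..<1::real} \<in> sets (lborel \<Otimes>\<^sub>M lborel)"
    by (intro pair_measureI) (simp_all add: atLeastLessThan_borel)
  then show ?thesis
    unfolding lborel_prod torus_def .
qed

lemma emeasure_torus: "emeasure lborel torus = 1"
proof -
  have "emeasure (lborel \<Otimes>\<^sub>M lborel) ({0..<1::real} \<times> {0..<1::real})
      = emeasure lborel {0..<1::real} * emeasure lborel {0..<1::real}"
    by (intro lborel.emeasure_pair_measure_Times) auto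
  then show ?thesis
    by (simp add: lborel_prod torus_def)
qed

lemma not_AE_notin_torus: "\<not> (AE z in lborel. z \<notin> torus)"
  using AE_iff_null_sets[OF sets_torus] emeasure_torus by (auto simp: null_sets_def)

lemma AE_s_tendsto_zero:
  assumes a: "\<And>p. p \<in> P \<Longrightarrow> 0 \<le> a p \<and> a p < int p"
    and P: "(\<lambda>p. 1 / real p) summable_on P"
  shows "AE z in lborel. z \<in> torus \<longrightarrow> ((\<lambda>p. s a p z) \<longlongrightarrow> 0) (inf sequentially (principal P))"
proof -
  have "0 \<le> of_int (a p) / real p \<and> of_int (a p) / real p < 1" if "p \<in> P" for p
    using a[OF that] by (simp add: field_simps)
  from AE_lborel_snd[OF AE_exp_sum_tendsto_zero[OF this P]]
  show ?thesis
    by (rule eventually_mono) (auto simp: torus_def norm_s intro: tendsto_norm_zero_cancel)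
qed

lemma AE_s_frequently_large:
  assumes "AE y in lborel. y \<in> {0..1} \<longrightarrow>
    infinite {p::nat. prime p \<and> \<bar>y - of_int (a p) / real p\<bar> \<le> 1 / (2 * real p)}"
  shows "AE z in lborel. z \<in> torus \<longrightarrow> infinite {p \<in> {p. prime p}. 2 / pi \<le> norm (s a p z)}"
  using AE_lborel_snd[OF assms]
proof (rule eventually_mono, intro impI)
  fix z :: "real \<times> real"
  assume "z \<in> torus" and "snd z \<in> {0..1} \<longrightarrow>
    infinite {p. prime p \<and> \<bar>snd z - of_int (a p) / real p\<bar> \<le> 1 / (2 * real p)}"
  then have "infinite {p. prime p \<and> \<bar>snd z - of_int (a p) / real p\<bar> \<le> 1 / (2 * real p)}"
    by (auto simp: torus_def)
  moreover have "{p. prime p \<and> \<bar>snd z - of_int (a p) / real p\<bar> \<le> 1 / (2 * real p)}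
      \<subseteq> {p \<in> {p. prime p}. 2 / pi \<le> norm (s a p z)}"
    by (auto intro: norm_s_ge prime_gt_0_nat)
  ultimately show "infinite {p \<in> {p. prime p}. 2 / pi \<le> norm (s a p z)}"
    by (rule infinite_super[rotated])
qed

theorem proposition4p1:
  fixes a :: "nat \<Rightarrow> int"
  assumes a_range: "\<And>p. prime p \<Longrightarrow> 0 \<le> a p \<and> a p < int p"
    and a_approx: "AE y in lborel. y \<in> {0..1} \<longrightarrow>
       infinite {p::nat. prime p \<and> \<bar>y - real_of_int (a p) / real p\<bar> \<le> 1 / (2 * real p)}"
  shows "(\<not> (AE z in lborel. z \<in> torus \<longrightarrow>
            (\<exists>L. ((\<lambda>p. s a p z) \<longlongrightarrow> L) (inf sequentially (principal {p. prime p})))))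
         \<and> (\<forall>P. P \<subseteq> {p. prime p} \<longrightarrow> infinite P \<longrightarrow>
            (\<lambda>p. ln (real p) / real p) summable_on P \<longrightarrow>
            (AE z in lborel. z \<in> torus \<longrightarrow>
               ((\<lambda>p. s a p z) \<longlongrightarrow> 0) (inf sequentially (principal P))))"
proof (intro conjI allI impI notI)
  assume converges: "AE z in lborel. z \<in> torus \<longrightarrow>
    (\<exists>L. ((\<lambda>p. s a p z) \<longlongrightarrow> L) (inf sequentially (principal {p. prime p})))"
  obtain P where P: "P \<subseteq> {p. prime p}" "infinite P" "(\<lambda>p. 1 / real p) summable_on P"
    using infinite_subset_summable_inverse[OF primes_infinite] .
  have "AE z in lborel. z \<in> torus \<longrightarrow> ((\<lambda>p. s a p z) \<longlongrightarrow> 0) (inf sequentially (principal P))"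
    using P a_range by (intro AE_s_tendsto_zero) auto
  moreover note AE_s_frequently_large[OF a_approx]
  ultimately have "AE z in lborel. z \<notin> torus"
    using converges
  proof eventually_elim
    case (elim z)
    show ?case
      using elim no_limit_if_frequently_large[of "{p. prime p}" "2 / pi" "\<lambda>p. s a p z" P] P
      by auto
  qed
  with not_AE_notin_torus show False ..
next
  fix P :: "nat set"
  assume "P \<subseteq> {p. prime p}" and "(\<lambda>p. ln (real p) / real p) summable_on P"
  then show "AE z in lborel. z \<in> torus \<longrightarrow> ((\<lambda>p. s a p z) \<longlongrightarrow> 0) (inf sequentially (principal P))"
    using a_range
    by (intro AE_s_tendsto_zero summable_on_inverse_if_summable_on_ln_div) (auto intro: prime_ge_2_nat)
qed

end
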